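(* Let $k\ge 3$, let $\sigma=\sigma_1\cdots\sigma_k\in\mathfrak S_k$ be a consecutive pattern, and let $1\text{-}\sigma$ denote the generalized pattern $1\text{-}(\sigma_1+1)(\sigma_2+1)\cdots(\sigma_k+1)$. Then $$\lim_{n\to\infty}\left(\frac{\alpha_n(1\text{-}\sigma)}{n!}\right)^{1/n}=\lim_{n\to\infty}\left(\frac{\alpha_n(\sigma)}{n!}\right)^{1/n},$$ and in particular the left-hand limit exists.
   Context: $\mathfrak S_n$ is the symmetric group on $\{1,\dots,n\}$, permutations in one-line notation. A generalized pattern of length $m$ is a permutation $\sigma_1\cdots\sigma_m\in\mathfrak S_m$ with, between each pair of adjacent entries, either a dash "-" or nothing. A permutation $\pi\in\mathfrak S_n$ contains it if there are indices $i_1<\dots<i_m$ with $i_{j+1}=i_j+1$ whenever there is no dash between $\sigma_j$ and $\sigma_{j+1}$, and with $\pi_{i_a}<\pi_{i_b}$ iff $\sigma_a<\sigma_b$ for all $a,b$; otherwise $\pi$ avoids it. A consecutive pattern has no dashes. $\alpha_n(\sigma)$ is the number of permutations in $\mathfrak S_n$ avoiding $\sigma$. *)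

theory Defs
  imports Complex_Main
begin

definition perms :: "nat \<Rightarrow> nat list set" where
  "perms n = {xs. length xs = n \<and> distinct xs \<and> set xs = {1..n}}"

text \<open>A generalized pattern is a permutation list sigma (of length m) together with
  a set D of dash positions: j \<in> D (0-based, j+1 < m) means there is a dash between
  the entries at positions j and j+1 (0-based); otherwise these entries must be
  adjacent in the text permutation.\<close>
definition contains_gp :: "nat list \<Rightarrow> nat set \<Rightarrow> nat list \<Rightarrow> bool" where
  "contains_gp \<sigma> D \<pi> \<longleftrightarrow>
    (\<exists>\<iota>::nat \<Rightarrow> nat.
       (\<forall>j. j + 1 < length \<sigma> \<longrightarrow> \<iota> j < \<iota> (j + 1)) \<and>
       (\<forall>j. j + 1 < length \<sigma> \<and> j \<notin> D \<longrightarrow> \<iota> (j + 1) = \<iota> j + 1) \<and>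
       (\<forall>j < length \<sigma>. \<iota> j < length \<pi>) \<and>
       (\<forall>a < length \<sigma>. \<forall>b < length \<sigma>.
           (\<pi> ! (\<iota> a) < \<pi> ! (\<iota> b)) \<longleftrightarrow> (\<sigma> ! a < \<sigma> ! b)))"

definition alpha :: "nat \<Rightarrow> nat list \<Rightarrow> nat set \<Rightarrow> nat" where
  "alpha n \<sigma> D = card {\<pi> \<in> perms n. \<not> contains_gp \<sigma> D \<pi>}"

text \<open>The generalized pattern 1-(sigma_1+1)...(sigma_k+1): a single dash after the first entry.\<close>
definition one_dash_pat :: "nat list \<Rightarrow> nat list" where
  "one_dash_pat \<sigma> = 1 # map Suc \<sigma>"

end

theory Submission
  imports Defs "HOL-Combinatorics.Multiset_Permutations"
begin

text \<open>Write \<open>a n\<close> and \<open>b n\<close> for the proportions of permutations of length \<open>n\<close> avoiding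
  \<open>\<sigma>\<close> and 1-\<open>\<sigma>\<close>. Cutting a permutation after position \<open>m\<close> and standardizing both
  parts shows that \<open>a\<close> is submultiplicative, so \<open>root n (a n)\<close> tends to
  \<open>L = inf root m (a m)\<close> (Fekete). An occurrence of 1-\<open>\<sigma>\<close> contains one of \<open>\<sigma>\<close>, so
  \<open>a n \<le> b n \<le> 1\<close>. Conversely, deleting the entry 1 from a permutation avoiding 1-\<open>\<sigma>\<close>
  leaves a prefix avoiding 1-\<open>\<sigma>\<close> and a suffix avoiding \<open>\<sigma>\<close>, because the 1 could
  precede any occurrence of \<open>\<sigma>\<close> in the suffix; hence
  \<open>n b n \<le> (\<Sum>p<n. b p a (n - 1 - p))\<close>. Feeding \<open>a n \<le> C r^n\<close>, valid for every
  \<open>r > L\<close>, into this recursion gives \<open>b n \<le> (n + c choose c) r^n\<close>, so \<open>root n (b n)\<close>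
  tends to \<open>L\<close> as well.\<close>

section \<open>Pattern containment\<close>

lemma perms_eq_permutations_of_set: "perms n = permutations_of_set {1..n}"
  unfolding perms_def permutations_of_set_def using distinct_card by fastforce

lemma finite_perms: "finite (perms n)"
  by (simp add: perms_eq_permutations_of_set)

lemma card_perms: "card (perms n) = fact n"
  by (simp add: perms_eq_permutations_of_set)

lemma contains_gp_order_cong:
  assumes "length xs = length ys"
    and "\<And>i j. i < length xs \<Longrightarrow> j < length xs \<Longrightarrow> xs ! i < xs ! j \<longleftrightarrow> ys ! i < ys ! j"
  shows "contains_gp \<sigma> D xs \<longleftrightarrow> contains_gp \<sigma> D ys"
proof -
  have transfer: "contains_gp \<sigma> D ys"
    if "contains_gp \<sigma> D xs" and "length xs = length ys"
      and "\<And>i j. i < length xs \<Longrightarrow> j < length xs \<Longrightarrow> xs ! i < xs ! j \<longleftrightarrow> ys ! i < ys ! j"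
    for xs ys :: "nat list"
  proof -
    from that(1) obtain \<iota> where
      "(\<forall>j. j + 1 < length \<sigma> \<longrightarrow> \<iota> j < \<iota> (j + 1)) \<and>
       (\<forall>j. j + 1 < length \<sigma> \<and> j \<notin> D \<longrightarrow> \<iota> (j + 1) = \<iota> j + 1) \<and>
       (\<forall>j < length \<sigma>. \<iota> j < length xs) \<and>
       (\<forall>a < length \<sigma>. \<forall>b < length \<sigma>. xs ! \<iota> a < xs ! \<iota> b \<longleftrightarrow> \<sigma> ! a < \<sigma> ! b)"
      unfolding contains_gp_def by blast
    then show ?thesis
      unfolding contains_gp_def using that(2,3) by (intro exI[of _ \<iota>]) auto
  qed
  show ?thesis
    using transfer[of xs ys] transfer[of ys xs] assms by auto
qed

lemma contains_gp_infix:
  assumes "contains_gp \<sigma> D ys"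
  shows "contains_gp \<sigma> D (xs @ ys @ zs)"
proof -
  obtain \<iota> where mono: "\<forall>j. j + 1 < length \<sigma> \<longrightarrow> \<iota> j < \<iota> (j + 1)"
    and adj: "\<forall>j. j + 1 < length \<sigma> \<and> j \<notin> D \<longrightarrow> \<iota> (j + 1) = \<iota> j + 1"
    and range: "\<forall>j < length \<sigma>. \<iota> j < length ys"
    and order: "\<forall>a < length \<sigma>. \<forall>b < length \<sigma>. ys ! \<iota> a < ys ! \<iota> b \<longleftrightarrow> \<sigma> ! a < \<sigma> ! b"
    using assms unfolding contains_gp_def by blast
  have "(xs @ ys @ zs) ! (length xs + \<iota> j) = ys ! \<iota> j" if "j < length \<sigma>" for j
    using range that by (simp add: nth_append)
  then show ?thesis
    unfolding contains_gp_def using mono adj range order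
    by (intro exI[of _ "\<lambda>j. length xs + \<iota> j"]) auto
qed

lemma contains_gp_take: "contains_gp \<sigma> D (take m xs) \<Longrightarrow> contains_gp \<sigma> D xs"
  using contains_gp_infix[of \<sigma> D "take m xs" "[]" "drop m xs"] by simp

lemma contains_gp_drop: "contains_gp \<sigma> D (drop m xs) \<Longrightarrow> contains_gp \<sigma> D xs"
  using contains_gp_infix[of \<sigma> D "drop m xs" "take m xs" "[]"] by simp

lemma contains_gp_one_dash_pat_imp:
  assumes "contains_gp (one_dash_pat \<sigma>) {0} \<pi>"
  shows "contains_gp \<sigma> {} \<pi>"
proof -
  obtain \<iota> where mono: "\<forall>j. j + 1 < Suc (length \<sigma>) \<longrightarrow> \<iota> j < \<iota> (j + 1)"
    and adj: "\<forall>j. j + 1 < Suc (length \<sigma>) \<and> j \<notin> {0} \<longrightarrow> \<iota> (j + 1) = \<iota> j + 1"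
    and range: "\<forall>j < Suc (length \<sigma>). \<iota> j < length \<pi>"
    and order: "\<forall>a < Suc (length \<sigma>). \<forall>b < Suc (length \<sigma>).
                  \<pi> ! \<iota> a < \<pi> ! \<iota> b \<longleftrightarrow> one_dash_pat \<sigma> ! a < one_dash_pat \<sigma> ! b"
    using assms unfolding contains_gp_def one_dash_pat_def by auto
  show ?thesis
    unfolding contains_gp_def
  proof (intro exI[of _ "\<lambda>j. \<iota> (Suc j)"] conjI allI impI)
    fix a b assume "a < length \<sigma>" "b < length \<sigma>"
    then show "\<pi> ! \<iota> (Suc a) < \<pi> ! \<iota> (Suc b) \<longleftrightarrow> \<sigma> ! a < \<sigma> ! b"
      using order[rule_format, of "Suc a" "Suc b"] by (simp add: one_dash_pat_def)
  qed (use mono adj range in auto)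
qed

lemma contains_gp_one_dash_pat_middle:
  assumes "contains_gp \<sigma> {} ys" and "\<forall>y\<in>set ys. v < y" and "0 \<notin> set \<sigma>"
  shows "contains_gp (one_dash_pat \<sigma>) {0} (xs @ v # ys)"
proof -
  obtain \<iota> where mono: "\<forall>j. j + 1 < length \<sigma> \<longrightarrow> \<iota> j < \<iota> (j + 1)"
    and adj: "\<forall>j. j + 1 < length \<sigma> \<longrightarrow> \<iota> (j + 1) = \<iota> j + 1"
    and range: "\<forall>j < length \<sigma>. \<iota> j < length ys"
    and order: "\<forall>a < length \<sigma>. \<forall>b < length \<sigma>. ys ! \<iota> a < ys ! \<iota> b \<longleftrightarrow> \<sigma> ! a < \<sigma> ! b"
    using assms(1) unfolding contains_gp_def by blast
  define \<kappa> where "\<kappa> j = (case j of 0 \<Rightarrow> length xs | Suc i \<Rightarrow> Suc (length xs + \<iota> i))" for j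
  let ?\<pi> = "xs @ v # ys"
  have at_\<kappa>: "?\<pi> ! \<kappa> (Suc j) = ys ! \<iota> j" if "j < length \<sigma>" for j
    using range that by (simp add: \<kappa>_def nth_append)
  have above_v: "v < ?\<pi> ! \<kappa> (Suc j)" and above_1: "1 < one_dash_pat \<sigma> ! Suc j"
    if "j < length \<sigma>" for j
  proof -
    show "v < ?\<pi> ! \<kappa> (Suc j)"
      using that at_\<kappa> range assms(2) by simp
    have "\<sigma> ! j \<noteq> 0"
      using that nth_mem assms(3) by metis
    then show "1 < one_dash_pat \<sigma> ! Suc j"
      using that by (simp add: one_dash_pat_def)
  qed
  show ?thesis
    unfolding contains_gp_def
  proof (intro exI[of _ \<kappa>] conjI allI impI)
    fix a b assume a: "a < length (one_dash_pat \<sigma>)" and b: "b < length (one_dash_pat \<sigma>)"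
    show "?\<pi> ! \<kappa> a < ?\<pi> ! \<kappa> b \<longleftrightarrow> one_dash_pat \<sigma> ! a < one_dash_pat \<sigma> ! b"
    proof (cases a; cases b)
      fix a' b' assume "a = Suc a'" "b = Suc b'"
      then show ?thesis
        using a b order at_\<kappa> by (simp add: one_dash_pat_def)
    qed (use a b above_v above_1 in \<open>force simp: \<kappa>_def one_dash_pat_def\<close>)+
  qed (use mono adj range in \<open>auto simp: \<kappa>_def one_dash_pat_def split: nat.split\<close>)
qed

section \<open>Standardization\<close>

definition rank_in :: "nat set \<Rightarrow> nat \<Rightarrow> nat" where
  "rank_in S x = card {y \<in> S. y \<le> x}"

definition standardize :: "nat list \<Rightarrow> nat list" where
  "standardize xs = map (rank_in (set xs)) xs"

lemma strict_mono_on_rank_in: "finite S \<Longrightarrow> strict_mono_on S (rank_in S)"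
  unfolding rank_in_def
proof (intro strict_mono_onI psubset_card_mono)
  fix x y assume "finite S" "x \<in> S" "y \<in> S" "x < y"
  then have "y \<in> {z \<in> S. z \<le> y} - {z \<in> S. z \<le> x}"
    by simp
  moreover have "{z \<in> S. z \<le> x} \<subseteq> {z \<in> S. z \<le> y}"
    using \<open>x < y\<close> by auto
  ultimately show "{z \<in> S. z \<le> x} \<subset> {z \<in> S. z \<le> y}"
    by blast
qed simp

lemma rank_in_less_iff:
  "finite S \<Longrightarrow> x \<in> S \<Longrightarrow> y \<in> S \<Longrightarrow> rank_in S x < rank_in S y \<longleftrightarrow> x < y"
  using strict_mono_on_less[OF strict_mono_on_rank_in] by blast

lemma inj_on_rank_in: "finite S \<Longrightarrow> inj_on (rank_in S) S"
  using strict_mono_on_imp_inj_on[OF strict_mono_on_rank_in] .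

lemma rank_in_bounds:
  assumes "finite S" "x \<in> S"
  shows "rank_in S x \<in> {1..card S}"
proof -
  have "0 < card {y \<in> S. y \<le> x}"
    using assms by (subst card_gt_0_iff) auto
  moreover have "card {y \<in> S. y \<le> x} \<le> card S"
    using assms by (intro card_mono) auto
  ultimately show ?thesis
    unfolding rank_in_def by simp
qed

lemma length_standardize [simp]: "length (standardize xs) = length xs"
  by (simp add: standardize_def)

lemma standardize_less_iff:
  "i < length xs \<Longrightarrow> j < length xs \<Longrightarrow> standardize xs ! i < standardize xs ! j \<longleftrightarrow> xs ! i < xs ! j"
  by (simp add: standardize_def rank_in_less_iff)

lemma standardize_in_perms:
  assumes "distinct xs"
  shows "standardize xs \<in> perms (length xs)"
proof -
  have "distinct (standardize xs)"
    using assms inj_on_rank_in[of "set xs"] by (simp add: standardize_def distinct_map)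
  moreover have "set (standardize xs) \<subseteq> {1..length xs}"
    using rank_in_bounds[of "set xs"] distinct_card[OF assms] by (auto simp: standardize_def)
  ultimately show ?thesis
    unfolding perms_def by (simp add: card_subset_eq distinct_card)
qed

lemma contains_gp_standardize: "contains_gp \<sigma> D (standardize xs) \<longleftrightarrow> contains_gp \<sigma> D xs"
  by (intro contains_gp_order_cong) (simp_all add: standardize_less_iff)

lemma standardize_inject:
  assumes "set xs = set ys" and "standardize xs = standardize ys"
  shows "xs = ys"
proof -
  have "map (rank_in (set xs)) xs = map (rank_in (set xs)) ys"
    using assms by (simp add: standardize_def)
  then show ?thesis
    using inj_on_rank_in[of "set xs"] assms(1) by (simp add: inj_on_map_eq_map)
qed

section \<open>Counting avoiders\<close>

lemma inj_on_split_standardize: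
  "inj_on (\<lambda>\<pi>. (set (take m \<pi>), standardize (take m \<pi>), standardize (drop m \<pi>)))
     {\<pi>. distinct \<pi> \<and> set \<pi> = A}"
proof (rule inj_onI)
  fix \<pi> \<rho>
  assume \<pi>: "\<pi> \<in> {\<pi>. distinct \<pi> \<and> set \<pi> = A}" and \<rho>: "\<rho> \<in> {\<pi>. distinct \<pi> \<and> set \<pi> = A}"
    and eq: "(set (take m \<pi>), standardize (take m \<pi>), standardize (drop m \<pi>))
      = (set (take m \<rho>), standardize (take m \<rho>), standardize (drop m \<rho>))"
  then have "take m \<pi> = take m \<rho>"
    using standardize_inject[of "take m \<pi>" "take m \<rho>"] by simp
  moreover have "set (drop m \<xi>) = A - set (take m \<xi>)" if "distinct \<xi>" "set \<xi> = A" for \<xi>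
  proof -
    have "set (take m \<xi>) \<union> set (drop m \<xi>) = A"
      using that by (metis append_take_drop_id set_append)
    moreover have "set (take m \<xi>) \<inter> set (drop m \<xi>) = {}"
      using that by (simp add: set_take_disj_set_drop_if_distinct)
    ultimately show ?thesis
      by blast
  qed
  ultimately have "drop m \<pi> = drop m \<rho>"
    using \<pi> \<rho> eq standardize_inject[of "drop m \<pi>" "drop m \<rho>"] by simp
  with \<open>take m \<pi> = take m \<rho>\<close> show "\<pi> = \<rho>"
    by (metis append_take_drop_id)
qed

lemma card_le_by_split:
  assumes "finite A" and "card A = m + n" and "finite S" and "finite T"
    and "\<And>\<pi>. \<pi> \<in> X \<Longrightarrow> distinct \<pi> \<and> set \<pi> = A \<and>
                         standardize (take m \<pi>) \<in> S \<and> standardize (drop m \<pi>) \<in> T"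
  shows "card X \<le> (m + n choose m) * card S * card T"
proof -
  define f where "f \<pi> = (set (take m \<pi>), standardize (take m \<pi>), standardize (drop m \<pi>))"
    for \<pi> :: "nat list"
  have "f ` X \<subseteq> {B. B \<subseteq> A \<and> card B = m} \<times> S \<times> T"
  proof
    fix y assume "y \<in> f ` X"
    then obtain \<pi> where \<pi>: "\<pi> \<in> X" and y: "y = f \<pi>" by blast
    have "length \<pi> = m + n"
      using assms(2) assms(5)[OF \<pi>] distinct_card[of \<pi>] by simp
    then have "card (set (take m \<pi>)) = m"
      using assms(5)[OF \<pi>] by (simp add: distinct_card)
    moreover have "set (take m \<pi>) \<subseteq> A"
      using assms(5)[OF \<pi>] set_take_subset[of m \<pi>] by blast
    ultimately show "y \<in> {B. B \<subseteq> A \<and> card B = m} \<times> S \<times> T"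
      using assms(5)[OF \<pi>] by (simp add: y f_def)
  qed
  moreover have "X \<subseteq> {\<pi>. distinct \<pi> \<and> set \<pi> = A}"
    using assms(5) by blast
  then have "inj_on f X"
    unfolding f_def by (rule inj_on_subset[OF inj_on_split_standardize])
  ultimately have "card X \<le> card ({B. B \<subseteq> A \<and> card B = m} \<times> S \<times> T)"
    using assms(1,3,4) by (intro card_inj_on_le) auto
  also have "\<dots> = (m + n choose m) * card S * card T"
    using assms(1,2) by (simp add: card_cartesian_product n_subsets)
  finally show ?thesis .
qed

definition Av :: "nat list \<Rightarrow> nat set \<Rightarrow> nat \<Rightarrow> nat list set" where
  "Av \<sigma> D n = {\<pi> \<in> perms n. \<not> contains_gp \<sigma> D \<pi>}"

lemma alpha_eq_card_Av: "alpha n \<sigma> D = card (Av \<sigma> D n)"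
  by (simp add: alpha_def Av_def)

lemma finite_Av: "finite (Av \<sigma> D n)"
  by (simp add: Av_def finite_perms)

lemma standardize_in_Av:
  "distinct xs \<Longrightarrow> \<not> contains_gp \<sigma> D xs \<Longrightarrow> standardize xs \<in> Av \<sigma> D (length xs)"
  by (simp add: Av_def standardize_in_perms contains_gp_standardize)

lemma card_Av_add_le:
  "card (Av \<sigma> D (m + n)) \<le> (m + n choose m) * card (Av \<sigma> D m) * card (Av \<sigma> D n)"
proof (rule card_le_by_split)
  fix \<pi> assume "\<pi> \<in> Av \<sigma> D (m + n)"
  then have "distinct \<pi>" "set \<pi> = {1..m + n}" "length \<pi> = m + n" "\<not> contains_gp \<sigma> D \<pi>"
    by (auto simp: Av_def perms_def)
  then show "distinct \<pi> \<and> set \<pi> = {1..m + n} \<and>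
      standardize (take m \<pi>) \<in> Av \<sigma> D m \<and> standardize (drop m \<pi>) \<in> Av \<sigma> D n"
    using standardize_in_Av[of "take m \<pi>" \<sigma> D] standardize_in_Av[of "drop m \<pi>" \<sigma> D]
      contains_gp_take[of \<sigma> D m \<pi>] contains_gp_drop[of \<sigma> D m \<pi>] by auto
qed (simp_all add: finite_Av)

lemma Av_one_dash_pat_delete_one:
  assumes "xs @ 1 # ys \<in> Av (one_dash_pat \<sigma>) {0} n" and "0 \<notin> set \<sigma>"
  shows "distinct (xs @ ys)" and "set (xs @ ys) = {2..n}"
    and "standardize xs \<in> Av (one_dash_pat \<sigma>) {0} (length xs)"
    and "standardize ys \<in> Av \<sigma> {} (n - 1 - length xs)"
proof -
  have dist: "distinct (xs @ 1 # ys)" and set_eq: "set (xs @ 1 # ys) = {1..n}"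
    and length_eq: "length (xs @ 1 # ys) = n"
    and avoids: "\<not> contains_gp (one_dash_pat \<sigma>) {0} (xs @ 1 # ys)"
    using assms(1) by (simp_all add: Av_def perms_def)
  then show "distinct (xs @ ys)"
    by simp
  have "set (xs @ ys) = set (xs @ 1 # ys) - {1}"
    using dist by auto
  also have "\<dots> = {2..n}"
    unfolding set_eq by auto
  finally show set_xs_ys: "set (xs @ ys) = {2..n}" .
  show "standardize xs \<in> Av (one_dash_pat \<sigma>) {0} (length xs)"
    using dist avoids contains_gp_infix[of _ _ xs "[]" "1 # ys"] standardize_in_Av[of xs] by auto
  have "set ys \<subseteq> {2..n}"
    using set_xs_ys unfolding set_append by blast
  then have "\<forall>y\<in>set ys. 1 < y"
    by auto
  then have "\<not> contains_gp \<sigma> {} ys"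
    using avoids contains_gp_one_dash_pat_middle[of \<sigma> ys 1 xs] assms(2) by blast
  then show "standardize ys \<in> Av \<sigma> {} (n - 1 - length xs)"
    using dist length_eq standardize_in_Av[of ys] by auto
qed

lemma card_Av_one_dash_pat_at_le:
  assumes "p < n" and "0 \<notin> set \<sigma>"
  shows "card {\<pi> \<in> Av (one_dash_pat \<sigma>) {0} n. \<pi> ! p = 1}
     \<le> (n - 1 choose p) * card (Av (one_dash_pat \<sigma>) {0} p) * card (Av \<sigma> {} (n - 1 - p))"
proof -
  define X where "X = {\<pi> \<in> Av (one_dash_pat \<sigma>) {0} n. \<pi> ! p = 1}"
  define delete where "delete \<pi> = take p \<pi> @ drop (Suc p) \<pi>" for \<pi> :: "nat list"
  have split: "\<pi> = take p \<pi> @ 1 # drop (Suc p) \<pi>" and len: "length (take p \<pi>) = p"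
    if "\<pi> \<in> X" for \<pi>
  proof -
    have "length \<pi> = n" and "\<pi> ! p = 1"
      using that by (simp_all add: X_def Av_def perms_def)
    then show "\<pi> = take p \<pi> @ 1 # drop (Suc p) \<pi>"
      using id_take_nth_drop[of p \<pi>] assms(1) by argo
    show "length (take p \<pi>) = p"
      using \<open>length \<pi> = n\<close> assms(1) by simp
  qed
  have "inj_on delete X"
  proof (rule inj_onI)
    fix \<pi> \<rho> assume \<pi>: "\<pi> \<in> X" and \<rho>: "\<rho> \<in> X" and "delete \<pi> = delete \<rho>"
    then have "take p \<pi> = take p \<rho> \<and> drop (Suc p) \<pi> = drop (Suc p) \<rho>"
      using len[OF \<pi>] len[OF \<rho>] by (simp add: delete_def append_eq_append_conv)
    then show "\<pi> = \<rho>"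
      using split[OF \<pi>] split[OF \<rho>] by argo
  qed
  then have "card X = card (delete ` X)"
    by (simp add: card_image)
  also have "\<dots> \<le> (p + (n - 1 - p) choose p)
      * card (Av (one_dash_pat \<sigma>) {0} p) * card (Av \<sigma> {} (n - 1 - p))"
  proof (rule card_le_by_split[where A = "{2..n}"])
    fix \<rho> assume "\<rho> \<in> delete ` X"
    then obtain \<pi> where \<pi>: "\<pi> \<in> X" and \<rho>: "\<rho> = delete \<pi>"
      by blast
    have "\<pi> \<in> Av (one_dash_pat \<sigma>) {0} n"
      using \<pi> by (simp add: X_def)
    with split[OF \<pi>] have "take p \<pi> @ 1 # drop (Suc p) \<pi> \<in> Av (one_dash_pat \<sigma>) {0} n"
      by argo
    from Av_one_dash_pat_delete_one[OF this assms(2)] show "distinct \<rho> \<and> set \<rho> = {2..n} \<and>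
        standardize (take p \<rho>) \<in> Av (one_dash_pat \<sigma>) {0} p \<and>
        standardize (drop p \<rho>) \<in> Av \<sigma> {} (n - 1 - p)"
      using len[OF \<pi>] by (simp add: \<rho> delete_def)
  qed (use assms(1) in \<open>simp_all add: finite_Av\<close>)
  also have "p + (n - 1 - p) = n - 1"
    using assms(1) by simp
  finally show ?thesis
    unfolding X_def .
qed

lemma card_Av_one_dash_pat_le:
  assumes "0 < n" and "0 \<notin> set \<sigma>"
  shows "card (Av (one_dash_pat \<sigma>) {0} n)
     \<le> (\<Sum>p<n. (n - 1 choose p) * card (Av (one_dash_pat \<sigma>) {0} p) * card (Av \<sigma> {} (n - 1 - p)))"
proof -
  have "Av (one_dash_pat \<sigma>) {0} n \<subseteq> (\<Union>p<n. {\<pi> \<in> Av (one_dash_pat \<sigma>) {0} n. \<pi> ! p = 1})"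
  proof
    fix \<pi> assume \<pi>: "\<pi> \<in> Av (one_dash_pat \<sigma>) {0} n"
    then have "1 \<in> set \<pi>" and "length \<pi> = n"
      using assms(1) by (auto simp: Av_def perms_def)
    with \<pi> show "\<pi> \<in> (\<Union>p<n. {\<pi> \<in> Av (one_dash_pat \<sigma>) {0} n. \<pi> ! p = 1})"
      by (auto simp: in_set_conv_nth)
  qed
  then have "card (Av (one_dash_pat \<sigma>) {0} n)
      \<le> card (\<Union>p<n. {\<pi> \<in> Av (one_dash_pat \<sigma>) {0} n. \<pi> ! p = 1})"
    by (intro card_mono) (simp_all add: finite_Av)
  also have "\<dots> \<le> (\<Sum>p<n. card {\<pi> \<in> Av (one_dash_pat \<sigma>) {0} n. \<pi> ! p = 1})"
    by (rule card_UN_le) simp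
  also have "\<dots> \<le> (\<Sum>p<n. (n - 1 choose p) * card (Av (one_dash_pat \<sigma>) {0} p) * card (Av \<sigma> {} (n - 1 - p)))"
    using card_Av_one_dash_pat_at_le assms by (intro sum_mono) simp
  finally show ?thesis .
qed

section \<open>Exponential growth rates\<close>

lemma sum_binomial_le: "c * (\<Sum>p<n. (p + c) choose c) \<le> n * ((n + c) choose c)"
proof (cases n)
  case 0
  then show ?thesis by simp
next
  case (Suc k)
  have "(\<Sum>p<n. (p + c) choose c) = (\<Sum>p\<le>k. (c + p) choose c)"
    by (simp add: Suc lessThan_Suc_atMost add.commute)
  also have "\<dots> = Suc (c + k) choose Suc c"
    using choose_rising_sum(1)[of c k] by simp
  finally have "c * (\<Sum>p<n. (p + c) choose c) \<le> Suc c * (Suc (c + k) choose Suc c)"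
    by simp
  also have "\<dots> = n * ((n + c) choose c)"
    using Suc_times_binomial_add[of c k] by (simp add: Suc add.commute)
  finally show ?thesis .
qed

lemma LIMSEQ_root_add_const:
  assumes "0 \<le> a"
  shows "(\<lambda>n. root n (real n + a)) \<longlonglongrightarrow> 1"
proof (rule tendsto_sandwich[OF _ _ tendsto_const])
  show "eventually (\<lambda>n. 1 \<le> root n (real n + a)) sequentially"
    using assms by (intro eventually_sequentiallyI[of 1]) simp
  show "eventually (\<lambda>n. root n (real n + a) \<le> root n (real n) * root n (1 + a)) sequentially"
  proof (intro eventually_sequentiallyI[of 1])
    fix n :: nat assume "1 \<le> n"
    then have "real n + a \<le> real n * (1 + a)"
      using assms mult_left_mono[of 1 "real n" a] by (simp add: algebra_simps)
    with \<open>1 \<le> n\<close> show "root n (real n + a) \<le> root n (real n) * root n (1 + a)"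
      by (simp add: real_root_mult[symmetric])
  qed
  show "(\<lambda>n. root n (real n) * root n (1 + a)) \<longlonglongrightarrow> 1"
    using tendsto_mult[OF LIMSEQ_root LIMSEQ_root_const[of "1 + a"]] assms by simp
qed

lemma LIMSEQ_root_binomial: "(\<lambda>n. root n (real ((n + c) choose c))) \<longlonglongrightarrow> 1"
proof (rule tendsto_sandwich[OF _ _ tendsto_const])
  show "eventually (\<lambda>n. 1 \<le> root n (real ((n + c) choose c))) sequentially"
    by (intro eventually_sequentiallyI[of 1]) (simp add: Suc_leI)
  show "eventually (\<lambda>n. root n (real ((n + c) choose c)) \<le> root n (real n + real c) ^ c) sequentially"
  proof (intro eventually_sequentiallyI[of 1])
    fix n :: nat assume "1 \<le> n"
    have "real ((n + c) choose c) \<le> (real n + real c) ^ c"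
      using binomial_le_pow[of c "n + c"] by (simp flip: of_nat_add of_nat_power)
    with \<open>1 \<le> n\<close> show "root n (real ((n + c) choose c)) \<le> root n (real n + real c) ^ c"
      by (simp add: real_root_power[symmetric])
  qed
  show "(\<lambda>n. root n (real n + real c) ^ c) \<longlonglongrightarrow> 1"
    using tendsto_power[OF LIMSEQ_root_add_const[of "real c"], of c] by simp
qed

lemma LIMSEQ_root_of_bounds:
  fixes x :: "nat \<Rightarrow> real"
  assumes "0 \<le> L" and lower: "\<And>n. 0 < n \<Longrightarrow> L \<le> root n (x n)"
    and upper: "\<And>r. L < r \<Longrightarrow> \<exists>c. \<forall>n. x n \<le> real ((n + c) choose c) * r ^ n"
  shows "(\<lambda>n. root n (x n)) \<longlonglongrightarrow> L"
proof (rule order_tendstoI)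
  fix y assume "y < L"
  then show "eventually (\<lambda>n. y < root n (x n)) sequentially"
    using lower by (intro eventually_sequentiallyI[of 1]) (auto intro: less_le_trans)
next
  fix y assume "L < y"
  define r where "r = (L + y) / 2"
  have r: "L < r" "r < y" "0 < r"
    using \<open>L < y\<close> \<open>0 \<le> L\<close> by (auto simp: r_def)
  then obtain c where c: "\<And>n. x n \<le> real ((n + c) choose c) * r ^ n"
    using upper by blast
  have "(\<lambda>n. root n (real ((n + c) choose c)) * r) \<longlonglongrightarrow> 1 * r"
    by (intro tendsto_mult LIMSEQ_root_binomial tendsto_const)
  then have "eventually (\<lambda>n. root n (real ((n + c) choose c)) * r < y) sequentially"
    using r by (intro order_tendstoD) auto
  moreover have "eventually (\<lambda>n. root n (x n) \<le> root n (real ((n + c) choose c)) * r) sequentially"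
  proof (intro eventually_sequentiallyI[of 1])
    fix n :: nat assume "1 \<le> n"
    then have "root n (x n) \<le> root n (real ((n + c) choose c) * r ^ n)"
      using c by simp
    also have "\<dots> = root n (real ((n + c) choose c)) * r"
      using r \<open>1 \<le> n\<close> by (simp add: real_root_mult real_root_power_cancel)
    finally show "root n (x n) \<le> root n (real ((n + c) choose c)) * r" .
  qed
  ultimately show "eventually (\<lambda>n. root n (x n) < y) sequentially"
    by eventually_elim auto
qed

lemma power_le_one_add_power:
  fixes x :: real
  assumes "0 \<le> x" and "j \<le> m"
  shows "x ^ j \<le> 1 + x ^ m"
proof (cases "x \<le> 1")
  case True
  then have "x ^ j \<le> 1"
    using assms(1) by (rule power_le_one[rotated])
  then show ?thesis
    using assms(1) by (simp add: add_increasing2)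
next
  case False
  then have "x ^ j \<le> x ^ m"
    using assms(2) by (intro power_increasing) simp_all
  then show ?thesis
    by simp
qed

locale submultiplicative_seq =
  fixes a :: "nat \<Rightarrow> real"
  assumes nonneg: "0 \<le> a n" and le_1: "a n \<le> 1" and submult: "a (m + n) \<le> a m * a n"
begin

lemma le_power_div: "a n \<le> a m ^ (n div m)"
proof -
  have "a (q * m + s) \<le> a m ^ q * a s" for q s
  proof (induction q)
    case (Suc q)
    have "a (Suc q * m + s) \<le> a m * a (q * m + s)"
      using submult[of m "q * m + s"] by (simp add: add.assoc)
    also have "\<dots> \<le> a m * (a m ^ q * a s)"
      using Suc nonneg by (intro mult_left_mono)
    finally show ?case
      by (simp add: mult.assoc)
  qed simp
  then have "a (n div m * m + n mod m) \<le> a m ^ (n div m) * a (n mod m)" .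
  also have "\<dots> \<le> a m ^ (n div m)"
    using nonneg le_1 by (intro mult_left_le) simp_all
  finally show ?thesis
    by simp
qed

lemma exp_bound:
  assumes "0 < m" and "root m (a m) < r"
  shows "\<exists>C. \<forall>n. a n \<le> C * r ^ n"
proof -
  have "0 \<le> root m (a m)"
    by (rule real_root_ge_zero[OF nonneg])
  with assms have "0 < r"
    by linarith
  have a_m: "a m \<le> r ^ m"
    using power_mono[OF less_imp_le[OF assms(2)] \<open>0 \<le> root m (a m)\<close>, of m]
    by (simp add: real_root_pow_pos2[OF assms(1) nonneg])
  have "a n \<le> (1 + (1 / r) ^ m) * r ^ n" for n
  proof -
    have "a n \<le> (r ^ m) ^ (n div m)"
      using le_power_div[of n m] power_mono[OF a_m nonneg] by (rule order_trans)
    also have "\<dots> = (1 / r) ^ (n mod m) * r ^ n"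
    proof -
      have "r ^ n = r ^ (m * (n div m)) * r ^ (n mod m)"
        by (simp flip: power_add)
      then show ?thesis
        using \<open>0 < r\<close> by (simp add: power_mult power_one_over)
    qed
    also have "\<dots> \<le> (1 + (1 / r) ^ m) * r ^ n"
      using power_le_one_add_power[of "1 / r" "n mod m" m] \<open>0 < r\<close> assms(1)
      by (intro mult_right_mono) simp_all
    finally show ?thesis .
  qed
  then show ?thesis
    by blast
qed

end

lemma exp_bound_nat_coeff:
  fixes a :: "nat \<Rightarrow> real"
  assumes "0 < r" and "\<And>n. a n \<le> C * r ^ n"
  shows "\<exists>c::nat. \<forall>n. a n \<le> real c * r ^ Suc n"
proof -
  define c where "c = nat \<lceil>C / r\<rceil>"
  have "C / r \<le> real c"
    unfolding c_def by (rule real_nat_ceiling_ge)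
  then have "C \<le> real c * r"
    using assms(1) by (simp add: pos_divide_le_eq)
  have "a n \<le> real c * r ^ Suc n" for n
  proof -
    have "a n \<le> C * r ^ n"
      by (rule assms(2))
    also have "\<dots> \<le> real c * r * r ^ n"
      using \<open>C \<le> real c * r\<close> assms(1) by (simp add: mult_right_mono)
    finally show ?thesis
      by (simp add: mult.assoc)
  qed
  then show ?thesis
    by blast
qed

text \<open>The degree of the binomial coefficient matches the constant in the bound on \<open>a\<close>:
  this is what makes the induction step close by \<open>sum_binomial_le\<close>.\<close>
lemma binomial_exp_bound_of_recursion:
  fixes a b :: "nat \<Rightarrow> real"
  assumes a_nonneg: "\<And>n. 0 \<le> a n" and b_nonneg: "\<And>n. 0 \<le> b n" and "b 0 \<le> 1"
    and "0 < r" and a_bound: "\<And>n. a n \<le> real c * r ^ Suc n"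
    and rec: "\<And>n. 0 < n \<Longrightarrow> real n * b n \<le> (\<Sum>p<n. b p * a (n - 1 - p))"
  shows "b n \<le> real ((n + c) choose c) * r ^ n"
proof (induction n rule: less_induct)
  case (less n)
  show ?case
  proof (cases "n = 0")
    case True
    then show ?thesis
      using \<open>b 0 \<le> 1\<close> by simp
  next
    case False
    have "real n * b n \<le> (\<Sum>p<n. b p * a (n - 1 - p))"
      using rec False by simp
    also have "\<dots> \<le> (\<Sum>p<n. real ((p + c) choose c) * r ^ p * (real c * r ^ Suc (n - 1 - p)))"
      using less.IH b_nonneg a_nonneg a_bound \<open>0 < r\<close> by (intro sum_mono mult_mono) simp_all
    also have "\<dots> = r ^ n * real (c * (\<Sum>p<n. (p + c) choose c))"
    proof -
      have "r ^ p * r ^ Suc (n - 1 - p) = r ^ n" if "p < n" for p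
      proof -
        have "p + Suc (n - 1 - p) = n"
          using that by simp
        then show ?thesis
          by (metis power_add)
      qed
      then show ?thesis
        unfolding of_nat_mult of_nat_sum sum_distrib_left
        by (intro sum.cong) (simp_all add: algebra_simps)
    qed
    also have "\<dots> \<le> r ^ n * real (n * ((n + c) choose c))"
      using \<open>0 < r\<close> by (intro mult_left_mono of_nat_mono sum_binomial_le) simp
    finally show ?thesis
      using False by (simp add: algebra_simps)
  qed
qed

lemma same_root_limit_of_recursion:
  fixes a b :: "nat \<Rightarrow> real"
  assumes "submultiplicative_seq a" and a_le_b: "\<And>n. a n \<le> b n" and b_le_1: "\<And>n. b n \<le> 1"
    and rec: "\<And>n. 0 < n \<Longrightarrow> real n * b n \<le> (\<Sum>p<n. b p * a (n - 1 - p))"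
  shows "\<exists>L. (\<lambda>n. root n (b n)) \<longlonglongrightarrow> L \<and> (\<lambda>n. root n (a n)) \<longlonglongrightarrow> L"
proof -
  interpret submultiplicative_seq a by fact
  define L where "L = (INF m\<in>{0<..}. root m (a m))"
  have bdd: "bdd_below ((\<lambda>m. root m (a m)) ` {0<..})"
    using nonneg by (intro bdd_belowI2[of _ 0]) simp
  have lower_a: "L \<le> root n (a n)" if "0 < n" for n
    unfolding L_def using bdd that by (intro cINF_lower) simp_all
  have "0 \<le> L"
    unfolding L_def using nonneg by (intro cINF_greatest) auto
  have b_nonneg: "0 \<le> b n" for n
    using nonneg[of n] a_le_b[of n] by linarith
  have upper_b: "\<exists>c. \<forall>n. b n \<le> real ((n + c) choose c) * r ^ n" if "L < r" for r
  proof -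
    obtain m where "0 < m" and "root m (a m) < r"
      using \<open>L < r\<close> cINF_less_iff[of "{0<..}" "\<lambda>m. root m (a m)" r] bdd
      unfolding L_def by auto
    then obtain C where "\<And>n. a n \<le> C * r ^ n"
      using exp_bound by blast
    moreover have "0 < r"
      using \<open>0 \<le> L\<close> \<open>L < r\<close> by linarith
    ultimately obtain c where "\<And>n. a n \<le> real c * r ^ Suc n"
      using exp_bound_nat_coeff by blast
    then show ?thesis
      using nonneg b_nonneg b_le_1 rec \<open>0 < r\<close> binomial_exp_bound_of_recursion by blast
  qed
  have "(\<lambda>n. root n (b n)) \<longlonglongrightarrow> L"
  proof (rule LIMSEQ_root_of_bounds[OF \<open>0 \<le> L\<close> _ upper_b])
    show "L \<le> root n (b n)" if "0 < n" for n
      using lower_a[OF that] a_le_b[of n] nonneg[of n] that by (meson order_trans real_root_le_mono)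
  qed
  moreover have "(\<lambda>n. root n (a n)) \<longlonglongrightarrow> L"
  proof (rule LIMSEQ_root_of_bounds[OF \<open>0 \<le> L\<close> lower_a])
    fix r assume "L < r"
    then obtain c where "\<forall>n. b n \<le> real ((n + c) choose c) * r ^ n"
      using upper_b by blast
    then show "\<exists>c. \<forall>n. a n \<le> real ((n + c) choose c) * r ^ n"
      using a_le_b order_trans by blast
  qed
  ultimately show ?thesis
    by blast
qed

lemma alpha_div_fact_le_1: "real (alpha n \<sigma> D) / fact n \<le> 1"
proof -
  have "alpha n \<sigma> D \<le> card (perms n)"
    unfolding alpha_eq_card_Av Av_def by (intro card_mono finite_perms) auto
  then have "real (alpha n \<sigma> D) \<le> real (card (perms n))"
    by (rule of_nat_mono)
  then show ?thesis
    by (simp add: card_perms divide_le_eq_1)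
qed

lemma alpha_le_alpha_one_dash_pat: "alpha n \<sigma> {} \<le> alpha n (one_dash_pat \<sigma>) {0}"
  unfolding alpha_eq_card_Av Av_def
  using contains_gp_one_dash_pat_imp by (intro card_mono) (auto simp: finite_perms)

lemma alpha_div_fact_submultiplicative:
  "real (alpha (m + n) \<sigma> D) / fact (m + n)
     \<le> real (alpha m \<sigma> D) / fact m * (real (alpha n \<sigma> D) / fact n)"
proof -
  have "real (alpha (m + n) \<sigma> D)
      \<le> real (m + n choose m) * real (alpha m \<sigma> D) * real (alpha n \<sigma> D)"
    using card_Av_add_le[of \<sigma> D m n] unfolding alpha_eq_card_Av
    by (simp flip: of_nat_mult)
  then have "real (alpha (m + n) \<sigma> D) / fact (m + n)
      \<le> real (m + n choose m) * real (alpha m \<sigma> D) * real (alpha n \<sigma> D) / fact (m + n)"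
    by (simp add: divide_right_mono)
  also have "\<dots> = real (alpha m \<sigma> D) / fact m * (real (alpha n \<sigma> D) / fact n)"
    by (simp add: binomial_fact)
  finally show ?thesis .
qed

lemma alpha_one_dash_pat_div_fact_recursion:
  assumes "0 < n" and "0 \<notin> set \<sigma>"
  shows "real n * (real (alpha n (one_dash_pat \<sigma>) {0}) / fact n)
    \<le> (\<Sum>p<n. real (alpha p (one_dash_pat \<sigma>) {0}) / fact p
               * (real (alpha (n - 1 - p) \<sigma> {}) / fact (n - 1 - p)))"
proof -
  have "real (alpha n (one_dash_pat \<sigma>) {0}) \<le> (\<Sum>p<n. real (n - 1 choose p)
      * real (alpha p (one_dash_pat \<sigma>) {0}) * real (alpha (n - 1 - p) \<sigma> {}))"
    using card_Av_one_dash_pat_le[OF assms] unfolding alpha_eq_card_Av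
    by (simp flip: of_nat_mult of_nat_sum)
  then have "real n * (real (alpha n (one_dash_pat \<sigma>) {0}) / fact n)
      \<le> (\<Sum>p<n. real (n - 1 choose p)
          * real (alpha p (one_dash_pat \<sigma>) {0}) * real (alpha (n - 1 - p) \<sigma> {})) / fact (n - 1)"
    using assms(1) by (simp add: fact_reduce[of n] divide_right_mono)
  also have "\<dots> = (\<Sum>p<n. real (alpha p (one_dash_pat \<sigma>) {0}) / fact p
               * (real (alpha (n - 1 - p) \<sigma> {}) / fact (n - 1 - p)))"
    unfolding sum_divide_distrib by (intro sum.cong) (simp_all add: binomial_fact)
  finally show ?thesis .
qed

theorem mainTheorem4:
  fixes k :: nat and \<sigma> :: "nat list"
  assumes "k \<ge> 3" and "\<sigma> \<in> perms k"
  shows "\<exists>L::real.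
     (\<lambda>n. root n (real (alpha n (one_dash_pat \<sigma>) {0}) / fact n)) \<longlonglongrightarrow> L \<and>
     (\<lambda>n. root n (real (alpha n \<sigma> {}) / fact n)) \<longlonglongrightarrow> L"
proof (rule same_root_limit_of_recursion)
  have "0 \<notin> set \<sigma>"
    using assms(2) by (auto simp: perms_def)
  then show "real n * (real (alpha n (one_dash_pat \<sigma>) {0}) / fact n)
      \<le> (\<Sum>p<n. real (alpha p (one_dash_pat \<sigma>) {0}) / fact p
               * (real (alpha (n - 1 - p) \<sigma> {}) / fact (n - 1 - p)))" if "0 < n" for n
    using that alpha_one_dash_pat_div_fact_recursion by blast
  show "submultiplicative_seq (\<lambda>n. real (alpha n \<sigma> {}) / fact n)"
    by unfold_locales (simp, rule alpha_div_fact_le_1, rule alpha_div_fact_submultiplicative)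
  show "real (alpha n \<sigma> {}) / fact n \<le> real (alpha n (one_dash_pat \<sigma>) {0}) / fact n" for n
    using alpha_le_alpha_one_dash_pat by (simp add: divide_right_mono)
  show "real (alpha n (one_dash_pat \<sigma>) {0}) / fact n \<le> 1" for n
    by (rule alpha_div_fact_le_1)
qed

end
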